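(* Let $p,q,K$ be parameters with $p\neq 0$, and let $a,b,c,d$ be generators of an associative algebra over $\mathbb{C}$ (extended by the parameters) subject to the relations $$ab=qba,\quad pac=ca,\quad ad=da+(q-p)bc,\quad pqbc=cb,\quad pbd=db,\quad cd=qdc.$$ Let $T=\begin{pmatrix} a&b\\ c&d\end{pmatrix}$ and $$\hat R(K;p,q)=\begin{pmatrix}1&0&0&0\\0&1-K&K/p&0\\0&Kq&1-Kq/p&0\\0&0&0&1\end{pmatrix},\qquad R=P\hat R(K;p,q).$$ Then for every value of $K$, $$R\,T_1T_2=T_2T_1\,R .$$
   Context: All $4\times4$ matrices are written in the ordered basis $e_1\otimes e_1,\ e_1\otimes e_2,\ e_2\otimes e_1,\ e_2\otimes e_2$ of $\mathbb{C}^2\otimes\mathbb{C}^2$, with double indices $(ij)$ ordered $11,12,21,22$. $P$ is the permutation (flip) matrix, i.e. the $4\times4$ matrix that swaps the second and third basis vectors. $T_1=T\otimes I_2$ and $T_2=I_2\otimes T$, so $T_1T_2$ has entries $(T_1T_2)_{(ij),(kl)}=T_{ik}T_{jl}$ and $T_2T_1$ has entries $(T_2T_1)_{(ij),(kl)}=T_{jl}T_{ik}$ (the entries of $T$ do not commute, so the order of factors matters). The equality $RT_1T_2=T_2T_1R$ is an equality of $4\times 4$ matrices with entries in the algebra. *)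

theory Defs
  imports Main
begin

text \<open>Matrices with entries in a (possibly noncommutative) ring are functions
  nat => nat => 'a; only indices 0..<n are meaningful. Index 0,1 of a 2x2 matrix
  correspond to 1,2 in the paper; the double index (ij) of a 4x4 matrix is
  encoded as 2*i+j, giving the order 11,12,21,22.\<close>

definition mmul :: "nat \<Rightarrow> (nat \<Rightarrow> nat \<Rightarrow> 'a::semiring_1) \<Rightarrow> (nat \<Rightarrow> nat \<Rightarrow> 'a) \<Rightarrow> nat \<Rightarrow> nat \<Rightarrow> 'a" where
  "mmul n A B = (\<lambda>i j. \<Sum>k<n. A i k * B k j)"

definition mat_of_rows :: "'a list list \<Rightarrow> nat \<Rightarrow> nat \<Rightarrow> 'a" where
  "mat_of_rows rows = (\<lambda>i j. rows ! i ! j)"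

definition id2 :: "nat \<Rightarrow> nat \<Rightarrow> 'a::semiring_1" where
  "id2 = (\<lambda>i j. if i = j then 1 else 0)"

definition kron2 :: "(nat \<Rightarrow> nat \<Rightarrow> 'a::semiring_1) \<Rightarrow> (nat \<Rightarrow> nat \<Rightarrow> 'a) \<Rightarrow> nat \<Rightarrow> nat \<Rightarrow> 'a" where
  "kron2 A B = (\<lambda>i j. A (i div 2) (j div 2) * B (i mod 2) (j mod 2))"

definition Tmat :: "'a \<Rightarrow> 'a \<Rightarrow> 'a \<Rightarrow> 'a \<Rightarrow> nat \<Rightarrow> nat \<Rightarrow> 'a" where
  "Tmat a b c d = mat_of_rows [[a, b], [c, d]]"

definition T1 :: "(nat \<Rightarrow> nat \<Rightarrow> 'a::semiring_1) \<Rightarrow> nat \<Rightarrow> nat \<Rightarrow> 'a" where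
  "T1 T = kron2 T id2"

definition T2 :: "(nat \<Rightarrow> nat \<Rightarrow> 'a::semiring_1) \<Rightarrow> nat \<Rightarrow> nat \<Rightarrow> 'a" where
  "T2 T = kron2 id2 T"

definition Pflip :: "nat \<Rightarrow> nat \<Rightarrow> 'a::semiring_1" where
  "Pflip = mat_of_rows [[1,0,0,0],[0,0,1,0],[0,1,0,0],[0,0,0,1]]"

text \<open>Rhat(K;p,q); pinv is the inverse of p, so K/p = K * pinv.\<close>
definition Rhat :: "'a::ring_1 \<Rightarrow> 'a \<Rightarrow> 'a \<Rightarrow> 'a \<Rightarrow> nat \<Rightarrow> nat \<Rightarrow> 'a" where
  "Rhat K p pinv q = mat_of_rows
     [[1, 0, 0, 0],
      [0, 1 - K, K * pinv, 0],
      [0, K * q, 1 - K * q * pinv, 0],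
      [0, 0, 0, 1]]"

definition Rmat :: "'a::ring_1 \<Rightarrow> 'a \<Rightarrow> 'a \<Rightarrow> 'a \<Rightarrow> nat \<Rightarrow> nat \<Rightarrow> 'a" where
  "Rmat K p pinv q = mmul 4 Pflip (Rhat K p pinv q)"

end

(*
  Conjugation by the flip P exchanges T1 T2 and T2 T1 entrywise, even though the entries of T
  do not commute: both (P T1 T2) and (T2 T1 P) have the entry T_jk T_il at ((ij),(kl)).
  Hence R T1 T2 = T2 T1 R follows once Rhat commutes with T1 T2. Writing Rhat = 1 + K N with N
  independent of K, and K central, this reduces to N T1 T2 = T1 T2 N; every entry of this
  identity is either trivial or one of the six defining relations.
*)
theory Submission
  imports Defs
begin

text \<open>Entries of \<^const>\<open>mat_of_rows\<close> outside the list bounds are unspecified, so identities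
  between n\<times>n matrices can only be stated on the index range.\<close>

definition mat_eq_on :: "nat \<Rightarrow> (nat \<Rightarrow> nat \<Rightarrow> 'a) \<Rightarrow> (nat \<Rightarrow> nat \<Rightarrow> 'a) \<Rightarrow> bool" where
  "mat_eq_on n A B \<longleftrightarrow> (\<forall>i<n. \<forall>j<n. A i j = B i j)"

lemma mat_eq_on_trans [trans]: "mat_eq_on n A B \<Longrightarrow> mat_eq_on n B C \<Longrightarrow> mat_eq_on n A C"
  by (simp add: mat_eq_on_def)

lemma mat_eq_on_refl [simp]: "mat_eq_on n A A"
  by (simp add: mat_eq_on_def)

lemma mat_eq_on_sym: "mat_eq_on n A B \<Longrightarrow> mat_eq_on n B A"
  by (simp add: mat_eq_on_def)

lemma mmul_assoc:
  fixes A B C :: "nat \<Rightarrow> nat \<Rightarrow> 'a::semiring_1"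
  shows "mmul n (mmul n A B) C = mmul n A (mmul n B C)"
  unfolding mmul_def
  by (intro ext) (simp add: sum_distrib_left sum_distrib_right mult.assoc, rule sum.swap)

lemma mmul_mat_eq_on_cong:
  fixes A A' B B' :: "nat \<Rightarrow> nat \<Rightarrow> 'a::semiring_1"
  assumes "mat_eq_on n A A'" "mat_eq_on n B B'"
  shows "mat_eq_on n (mmul n A B) (mmul n A' B')"
  using assms by (simp add: mat_eq_on_def mmul_def)

lemma mmul_id2_left: "i < n \<Longrightarrow> mmul n id2 A i j = A i j"
  by (simp add: mmul_def id2_def if_distrib[of "\<lambda>x. x * _"] cong: if_cong)

lemma mmul_id2_right: "j < n \<Longrightarrow> mmul n A id2 i j = A i j"
  by (simp add: mmul_def id2_def if_distrib[of "\<lambda>x. _ * x"] cong: if_cong)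

lemma mmul_commute_id2_plus_scaled:
  fixes N X :: "nat \<Rightarrow> nat \<Rightarrow> 'a::ring_1"
  assumes commute: "mat_eq_on n (mmul n N X) (mmul n X N)"
    and central: "\<And>i j. i < n \<Longrightarrow> j < n \<Longrightarrow> K * X i j = X i j * K"
  shows "mat_eq_on n (mmul n (\<lambda>i j. id2 i j + K * N i j) X) (mmul n X (\<lambda>i j. id2 i j + K * N i j))"
  unfolding mat_eq_on_def
proof (intro allI impI)
  fix i j assume i: "i < n" and j: "j < n"
  let ?M = "\<lambda>i j. id2 i j + K * N i j"
  have "mmul n ?M X i j = mmul n id2 X i j + K * mmul n N X i j"
    by (simp add: mmul_def distrib_right sum.distrib sum_distrib_left mult.assoc)
  also have "\<dots> = X i j + K * mmul n X N i j"
    using commute i j by (simp add: mmul_id2_left mat_eq_on_def)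
  also have "\<dots> = mmul n X id2 i j + mmul n X (\<lambda>i j. K * N i j) i j"
    using central i j
    by (simp add: mmul_id2_right) (simp add: mmul_def sum_distrib_left flip: mult.assoc)
  also have "\<dots> = mmul n X ?M i j"
    by (simp add: mmul_def distrib_left sum.distrib)
  finally show "mmul n ?M X i j = mmul n X ?M i j" .
qed

lemma sum_lessThan_4:
  fixes f :: "nat \<Rightarrow> 'a::comm_monoid_add"
  shows "(\<Sum>k<4. f k) = f 0 + f 1 + f 2 + f 3"
  by (simp add: numeral_eq_Suc add.assoc)

lemma all_less_4: "(\<forall>i<4. P i) \<longleftrightarrow> P 0 \<and> P 1 \<and> P 2 \<and> P (3::nat)"
  by (auto simp: numeral_eq_Suc less_Suc_eq)

lemma T1_mmul_T2: "mat_eq_on 4 (mmul 4 (T1 A) (T2 B)) (kron2 A B)"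
  unfolding mat_eq_on_def all_less_4
  by (simp add: mmul_def sum_lessThan_4 T1_def T2_def kron2_def id2_def)

lemma Pflip_T1_T2:
  "mat_eq_on 4 (mmul 4 Pflip (mmul 4 (T1 A) (T2 B))) (mmul 4 (mmul 4 (T2 A) (T1 B)) Pflip)"
  unfolding mat_eq_on_def all_less_4
  by (simp add: mmul_def sum_lessThan_4 T1_def T2_def kron2_def id2_def Pflip_def mat_of_rows_def)

definition Rhat_K_coeff :: "'a::ring_1 \<Rightarrow> 'a \<Rightarrow> nat \<Rightarrow> nat \<Rightarrow> 'a" where
  "Rhat_K_coeff pinv q = mat_of_rows
     [[0, 0, 0, 0],
      [0, -1, pinv, 0],
      [0, q, - (q * pinv), 0],
      [0, 0, 0, 0]]"

lemma Rhat_eq_on_id2_plus: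
  "mat_eq_on 4 (Rhat K p pinv q) (\<lambda>i j. id2 i j + K * Rhat_K_coeff pinv q i j)"
  unfolding mat_eq_on_def all_less_4
  by (simp add: Rhat_def Rhat_K_coeff_def id2_def mat_of_rows_def mult.assoc)

locale quantum_matrix_pq =
  fixes a b c d p pinv q :: "'a::ring_1"
  assumes scalars_central: "\<And>x y. x \<in> {p, pinv, q} \<Longrightarrow> y \<in> {a, b, c, d, p, pinv, q} \<Longrightarrow> x * y = y * x"
    and p_pinv: "p * pinv = 1" and pinv_p: "pinv * p = 1"
    and ab: "a * b = q * (b * a)"
    and ac: "p * (a * c) = c * a"
    and ad: "a * d = d * a + (q - p) * (b * c)"
    and bc: "p * q * (b * c) = c * b"
    and bd: "p * (b * d) = d * b"
    and cd: "c * d = q * (d * c)"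
begin

lemma generator_scalar_commute:
  assumes "x \<in> {p, pinv, q}" "y \<in> {a, b, c, d}"
  shows "y * x = x * y" "y * (x * z) = x * (y * z)"
proof -
  have "x * y = y * x"
    using assms by (intro scalars_central) auto
  then show "y * x = x * y" "y * (x * z) = x * (y * z)"
    by (simp_all flip: mult.assoc)
qed

lemmas generators_scalar_commute =
  generator_scalar_commute[where y = a] generator_scalar_commute[where y = b]
  generator_scalar_commute[where y = c] generator_scalar_commute[where y = d]

lemma scalars_ordered:
  "pinv * p = p * pinv" "q * p = p * q" "q * pinv = pinv * q"
  "pinv * (p * z) = p * (pinv * z)" "q * (p * z) = p * (q * z)" "q * (pinv * z) = pinv * (q * z)"
proof -
  show "pinv * p = p * pinv" "q * p = p * q" "q * pinv = pinv * q"
    by (simp_all add: scalars_central)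
  then show "pinv * (p * z) = p * (pinv * z)" "q * (p * z) = p * (q * z)" "q * (pinv * z) = pinv * (q * z)"
    by (simp_all flip: mult.assoc)
qed

lemma p_pinv_cancel: "p * (pinv * z) = z"
  by (simp add: p_pinv flip: mult.assoc)

text \<open>Together with the commutation rules above, these orient every product of two generators
  towards one of ba, ca, da, bc, db, dc, giving a normal form for the simplifier.\<close>

lemma relations_ordered:
  "a * b = q * (b * a)" "a * c = pinv * (c * a)" "a * d = d * a + (q - p) * (b * c)"
  "c * b = p * (q * (b * c))" "b * d = pinv * (d * b)" "c * d = q * (d * c)"
proof -
  have cancel: "pinv * (p * z) = z" for z
    by (simp add: pinv_p flip: mult.assoc)
  show "a * c = pinv * (c * a)" "b * d = pinv * (d * b)"
    by (simp_all add: cancel flip: ac bd)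
  show "c * b = p * (q * (b * c))"
    by (simp add: mult.assoc flip: bc)
qed (fact ab ad cd)+

lemma Rhat_K_coeff_commutes_T1_T2:
  defines "X \<equiv> mmul 4 (T1 (Tmat a b c d)) (T2 (Tmat a b c d))"
  shows "mat_eq_on 4 (mmul 4 (Rhat_K_coeff pinv q) X) (mmul 4 X (Rhat_K_coeff pinv q))"
proof -
  let ?N = "Rhat_K_coeff pinv q" and ?TT = "kron2 (Tmat a b c d) (Tmat a b c d)"
  have X: "mat_eq_on 4 X ?TT"
    unfolding X_def by (rule T1_mmul_T2)
  then have "mat_eq_on 4 (mmul 4 ?N X) (mmul 4 ?N ?TT)"
    by (simp add: mmul_mat_eq_on_cong)
  also have "mat_eq_on 4 \<dots> (mmul 4 ?TT ?N)"
    \<comment> \<open>row 0 of the commutator is the ab relation, column 0 the ac, column 3 the bd and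
      row 3 the cd relation; the central 2\<times>2 block needs the ad and bc relations\<close>
    unfolding mat_eq_on_def all_less_4
    by (simp add: mmul_def sum_lessThan_4 Rhat_K_coeff_def kron2_def Tmat_def mat_of_rows_def
        algebra_simps generators_scalar_commute scalars_ordered p_pinv_cancel relations_ordered)
  also have "mat_eq_on 4 \<dots> (mmul 4 X ?N)"
    using mmul_mat_eq_on_cong[OF mat_eq_on_sym[OF X] mat_eq_on_refl] .
  finally show ?thesis .
qed

lemma Rhat_commutes_T1_T2:
  assumes K_central: "\<And>y. y \<in> {a, b, c, d} \<Longrightarrow> K * y = y * K"
  defines "X \<equiv> mmul 4 (T1 (Tmat a b c d)) (T2 (Tmat a b c d))"
  shows "mat_eq_on 4 (mmul 4 (Rhat K p pinv q) X) (mmul 4 X (Rhat K p pinv q))"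
proof -
  let ?T = "Tmat a b c d" and ?M = "\<lambda>i j. id2 i j + K * Rhat_K_coeff pinv q i j"
  have K_commute: "K * y = y * K" "K * (y * z) = y * (K * z)" if "y \<in> {a, b, c, d}" for y z
    using K_central[OF that] by (simp_all flip: mult.assoc)
  have "\<forall>i<4. \<forall>j<4. K * kron2 ?T ?T i j = kron2 ?T ?T i j * K"
    unfolding all_less_4 by (simp add: kron2_def Tmat_def mat_of_rows_def K_commute mult.assoc)
  then have K_X: "K * X i j = X i j * K" if "i < 4" "j < 4" for i j
    using T1_mmul_T2[of ?T ?T] that by (simp add: X_def mat_eq_on_def)
  have "mat_eq_on 4 (mmul 4 (Rhat K p pinv q) X) (mmul 4 ?M X)"
    by (simp add: mmul_mat_eq_on_cong Rhat_eq_on_id2_plus)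
  also have "mat_eq_on 4 \<dots> (mmul 4 X ?M)"
    using Rhat_K_coeff_commutes_T1_T2 K_X unfolding X_def
    by (rule mmul_commute_id2_plus_scaled)
  also have "mat_eq_on 4 \<dots> (mmul 4 X (Rhat K p pinv q))"
    using mmul_mat_eq_on_cong[OF mat_eq_on_refl mat_eq_on_sym[OF Rhat_eq_on_id2_plus]] .
  finally show ?thesis .
qed

lemma RTT_relation:
  assumes K_central: "\<And>y. y \<in> {a, b, c, d} \<Longrightarrow> K * y = y * K"
  defines "T \<equiv> Tmat a b c d"
  shows "mat_eq_on 4 (mmul 4 (Rmat K p pinv q) (mmul 4 (T1 T) (T2 T)))
                     (mmul 4 (mmul 4 (T2 T) (T1 T)) (Rmat K p pinv q))"
proof -
  let ?X = "mmul 4 (T1 T) (T2 T)" and ?Y = "mmul 4 (T2 T) (T1 T)" and ?Rh = "Rhat K p pinv q"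
  have "mat_eq_on 4 (mmul 4 (Rmat K p pinv q) ?X) (mmul 4 Pflip (mmul 4 ?Rh ?X))"
    by (simp add: Rmat_def mmul_assoc)
  also have "mat_eq_on 4 \<dots> (mmul 4 Pflip (mmul 4 ?X ?Rh))"
    using Rhat_commutes_T1_T2[OF K_central] unfolding T_def by (simp add: mmul_mat_eq_on_cong)
  also have "mat_eq_on 4 \<dots> (mmul 4 (mmul 4 Pflip ?X) ?Rh)"
    by (simp add: mmul_assoc)
  also have "mat_eq_on 4 \<dots> (mmul 4 (mmul 4 ?Y Pflip) ?Rh)"
    using mmul_mat_eq_on_cong[OF Pflip_T1_T2 mat_eq_on_refl] .
  also have "mat_eq_on 4 \<dots> (mmul 4 ?Y (Rmat K p pinv q))"
    by (simp add: Rmat_def mmul_assoc)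
  finally show ?thesis .
qed

end

theorem mainTheorem1:
  fixes a b c d p pinv q K :: "'a::ring_1"
  assumes central: "\<And>x. x \<in> {p, pinv, q, K} \<Longrightarrow> \<forall>y \<in> {a, b, c, d, p, pinv, q, K}. x * y = y * x"
    and p_inv: "p * pinv = 1" "pinv * p = 1"
    and r1: "a * b = q * (b * a)"
    and r2: "p * (a * c) = c * a"
    and r3: "a * d = d * a + (q - p) * (b * c)"
    and r4: "p * q * (b * c) = c * b"
    and r5: "p * (b * d) = d * b"
    and r6: "c * d = q * (d * c)"
  shows "\<forall>i<4. \<forall>j<4.
    mmul 4 (Rmat K p pinv q) (mmul 4 (T1 (Tmat a b c d)) (T2 (Tmat a b c d))) i j =
    mmul 4 (mmul 4 (T2 (Tmat a b c d)) (T1 (Tmat a b c d))) (Rmat K p pinv q) i j"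
proof -
  interpret quantum_matrix_pq a b c d p pinv q
  proof
    show "x * y = y * x" if "x \<in> {p, pinv, q}" "y \<in> {a, b, c, d, p, pinv, q}" for x y
      using central[of x] that by blast
  qed (fact p_inv r1 r2 r3 r4 r5 r6)+
  have "mat_eq_on 4 (mmul 4 (Rmat K p pinv q) (mmul 4 (T1 (Tmat a b c d)) (T2 (Tmat a b c d))))
    (mmul 4 (mmul 4 (T2 (Tmat a b c d)) (T1 (Tmat a b c d))) (Rmat K p pinv q))"
    by (rule RTT_relation) (use central in blast)
  then show ?thesis
    unfolding mat_eq_on_def .
qed

end
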